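(* Let $\mathcal{P}=(|K|,V)$ be a polyhedral model and $x_1,x_2\in|K|$. Then $x_1\equiv_\eta x_2$ if and only if $x_1\approx_\triangle x_2$.
   Context: Fix a set PL of proposition letters. A simplex $\sigma\subseteq\mathbb{R}^m$ is the convex hull of $d+1$ affinely independent points; its faces are the simplices spanned by nonempty subsets of its vertices; its relative interior (cell) is $\tilde\sigma=\{\sum_i\lambda_iv_i:\lambda_i\in(0,1],\sum_i\lambda_i=1\}$. A simplicial complex $K$ is a finite set of simplices in $\mathbb{R}^m$ closed under faces, any two of which intersect in a common face or in $\emptyset$. The polyhedron $|K|$ is the union of its simplices with the subspace topology; the cells partition $|K|$. A polyhedral model is $\mathcal{P}=(|K|,V)$ with $V:\mathrm{PL}\to\mathcal{P}(|K|)$, each $V(p)$ a union of cells. A topological path from $x$ is a continuous $\pi:[0,1]\to|K|$ with $\pi(0)=x$. SLCS$_\eta$ formulas: $\Phi::=p\mid\neg\Phi\mid\Phi_1\wedge\Phi_2\mid\eta(\Phi_1,\Phi_2)$; $x\models p$ iff $x\in V(p)$; negation, conjunction standard; $x\models\eta(\Phi_1,\Phi_2)$ iff some topological path $\pi$ from $x$ has $\pi(1)\models\Phi_2$ and $\pi(r)\models\Phi_1$ for all $r\in[0,1)$. $x_1\equiv_\eta x_2$ means $x_1,x_2$ satisfy the same SLCS$_\eta$ formulas. A weak simplicial bisimulation is a symmetric relation $B\subseteq|K|\times|K|$ such that whenever $B(x_1,x_2)$: (1) for all $p$, $x_1\in V(p)$ iff $x_2\in V(p)$; (2) for each topological path $\pi_1$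 from $x_1$ there is a topological path $\pi_2$ from $x_2$ with $B(\pi_1(1),\pi_2(1))$ and such that for all $r_2\in[0,1)$ there is $r_1\in[0,1)$ with $B(\pi_1(r_1),\pi_2(r_2))$. $x_1\approx_\triangle x_2$ iff some weak simplicial bisimulation contains $(x_1,x_2)$. *)

theory Defs
  imports "HOL-Analysis.Analysis"
begin

definition simplex_of :: "'a::euclidean_space set \<Rightarrow> 'a set \<Rightarrow> bool" where
  "simplex_of C \<sigma> \<longleftrightarrow> finite C \<and> C \<noteq> {} \<and> \<not> affine_dependent C \<and> \<sigma> = convex hull C"

definition is_simplex :: "'a::euclidean_space set \<Rightarrow> bool" where
  "is_simplex \<sigma> \<longleftrightarrow> (\<exists>C. simplex_of C \<sigma>)"

definition simplex_face :: "'a::euclidean_space set \<Rightarrow> 'a set \<Rightarrow> bool" where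
  "simplex_face \<tau> \<sigma> \<longleftrightarrow> (\<exists>C D. simplex_of C \<sigma> \<and> D \<subseteq> C \<and> D \<noteq> {} \<and> \<tau> = convex hull D)"

definition cell :: "'a::euclidean_space set \<Rightarrow> 'a set" where
  "cell \<sigma> = {x. \<exists>C l. simplex_of C \<sigma> \<and> (\<forall>v\<in>C. 0 < l v \<and> l v \<le> 1) \<and>
                        sum l C = 1 \<and> x = (\<Sum>v\<in>C. l v *\<^sub>R v)}"

definition simplicial_complex :: "'a::euclidean_space set set \<Rightarrow> bool" where
  "simplicial_complex K \<longleftrightarrow> finite K \<and> (\<forall>\<sigma>\<in>K. is_simplex \<sigma>) \<and>
     (\<forall>\<sigma>\<in>K. \<forall>\<tau>. simplex_face \<tau> \<sigma> \<longrightarrow> \<tau> \<in> K) \<and>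
     (\<forall>\<sigma>\<in>K. \<forall>\<tau>\<in>K. \<sigma> \<inter> \<tau> = {} \<or> (simplex_face (\<sigma> \<inter> \<tau>) \<sigma> \<and> simplex_face (\<sigma> \<inter> \<tau>) \<tau>))"

definition carrier_poly :: "'a::euclidean_space set set \<Rightarrow> 'a set" where
  "carrier_poly K = \<Union>K"

definition polyhedral_model :: "'a::euclidean_space set set \<Rightarrow> ('p \<Rightarrow> 'a set) \<Rightarrow> bool" where
  "polyhedral_model K V \<longleftrightarrow> simplicial_complex K \<and>
     (\<forall>p. \<exists>S\<subseteq>K. V p = \<Union>(cell ` S))"

definition topo_path :: "'a::euclidean_space set set \<Rightarrow> 'a \<Rightarrow> (real \<Rightarrow> 'a) \<Rightarrow> bool" where
  "topo_path K x \<pi> \<longleftrightarrow> continuous_on {0..1} \<pi> \<and> \<pi> ` {0..1} \<subseteq> carrier_poly K \<and> \<pi> 0 = x"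

datatype 'p slcs = Atom 'p | Neg "'p slcs" | Conj "'p slcs" "'p slcs" | Eta "'p slcs" "'p slcs"

primrec sat :: "'a::euclidean_space set set \<Rightarrow> ('p \<Rightarrow> 'a set) \<Rightarrow> 'a \<Rightarrow> 'p slcs \<Rightarrow> bool" where
  "sat K V x (Atom p) \<longleftrightarrow> x \<in> V p"
| "sat K V x (Neg \<phi>) \<longleftrightarrow> \<not> sat K V x \<phi>"
| "sat K V x (Conj \<phi> \<psi>) \<longleftrightarrow> sat K V x \<phi> \<and> sat K V x \<psi>"
| "sat K V x (Eta \<phi> \<psi>) \<longleftrightarrow> (\<exists>\<pi>. topo_path K x \<pi> \<and> sat K V (\<pi> 1) \<psi> \<and>
                                   (\<forall>r\<in>{0..<1}. sat K V (\<pi> r) \<phi>))"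

definition eta_equiv :: "'a::euclidean_space set set \<Rightarrow> ('p \<Rightarrow> 'a set) \<Rightarrow> 'a \<Rightarrow> 'a \<Rightarrow> bool" where
  "eta_equiv K V x1 x2 \<longleftrightarrow> (\<forall>\<phi>. sat K V x1 \<phi> \<longleftrightarrow> sat K V x2 \<phi>)"

definition weak_simp_bisim :: "'a::euclidean_space set set \<Rightarrow> ('p \<Rightarrow> 'a set) \<Rightarrow> ('a \<Rightarrow> 'a \<Rightarrow> bool) \<Rightarrow> bool" where
  "weak_simp_bisim K V B \<longleftrightarrow>
     (\<forall>x y. B x y \<longrightarrow> x \<in> carrier_poly K \<and> y \<in> carrier_poly K) \<and>
     (\<forall>x y. B x y \<longrightarrow> B y x) \<and>
     (\<forall>x1 x2. B x1 x2 \<longrightarrow>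
        (\<forall>p. x1 \<in> V p \<longleftrightarrow> x2 \<in> V p) \<and>
        (\<forall>\<pi>1. topo_path K x1 \<pi>1 \<longrightarrow>
           (\<exists>\<pi>2. topo_path K x2 \<pi>2 \<and> B (\<pi>1 1) (\<pi>2 1) \<and>
                 (\<forall>r2\<in>{0..<1}. \<exists>r1\<in>{0..<1}. B (\<pi>1 r1) (\<pi>2 r2)))))"

definition weak_simp_bisimilar :: "'a::euclidean_space set set \<Rightarrow> ('p \<Rightarrow> 'a set) \<Rightarrow> 'a \<Rightarrow> 'a \<Rightarrow> bool" where
  "weak_simp_bisimilar K V x1 x2 \<longleftrightarrow> (\<exists>B. weak_simp_bisim K V B \<and> B x1 x2)"

end

theory Submission
  imports Defs
begin

text \<open>
  Soundness: a weak simplicial bisimulation preserves every formula, by induction on formulas.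
  Completeness: logical equivalence, restricted to the polyhedron, is itself a weak simplicial
  bisimulation. Points of one cell satisfy the same formulas (a path from one point can be
  prefixed by a segment inside the convex cell), and there are finitely many cells, so
  \<open>\<equiv>\<^sub>\<eta>\<close> has finitely many classes and each class is defined by a single formula: the
  conjunction of formulas distinguishing it from the other classes. Given a path \<open>\<pi>\<^sub>1\<close> from
  \<open>x\<^sub>1\<close>, the formula \<open>\<eta>(\<Phi>, \<psi>)\<close>, with \<open>\<Phi>\<close> the disjunction of the classes met by
  \<open>\<pi>\<^sub>1\<close> before time 1 and \<open>\<psi>\<close> the class of \<open>\<pi>\<^sub>1(1)\<close>, holds at \<open>x\<^sub>1\<close>, hence at
  \<open>x\<^sub>2\<close>, and a witnessing path from \<open>x\<^sub>2\<close> is the required matching path.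
\<close>

lemma cell_eq_rel_interior:
  fixes \<sigma> :: "'a::euclidean_space set"
  assumes "is_simplex \<sigma>"
  shows "cell \<sigma> = rel_interior \<sigma>"
proof
  show "cell \<sigma> \<subseteq> rel_interior \<sigma>"
  proof
    fix x assume "x \<in> cell \<sigma>"
    then obtain C l where C: "simplex_of C \<sigma>" "\<forall>v\<in>C. 0 < l v \<and> l v \<le> 1"
      "sum l C = 1" "x = (\<Sum>v\<in>C. l v *\<^sub>R v)" unfolding cell_def by blast
    then have indep: "\<not> affine_dependent C" unfolding simplex_of_def by blast
    have "x \<in> rel_interior (convex hull C)"
      unfolding rel_interior_convex_hull_explicit[OF indep] using C by blast
    then show "x \<in> rel_interior \<sigma>" using C unfolding simplex_of_def by simp
  qed
next
  show "rel_interior \<sigma> \<subseteq> cell \<sigma>"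
  proof
    fix x assume x: "x \<in> rel_interior \<sigma>"
    obtain C where C: "simplex_of C \<sigma>" using assms unfolding is_simplex_def by blast
    then have indep: "\<not> affine_dependent C" and fin: "finite C" and \<sigma>: "\<sigma> = convex hull C"
      unfolding simplex_of_def by auto
    obtain u where u: "\<forall>v\<in>C. 0 < u v" "sum u C = 1" "(\<Sum>v\<in>C. u v *\<^sub>R v) = x"
      using x unfolding \<sigma> rel_interior_convex_hull_explicit[OF indep] by blast
    have "\<forall>v\<in>C. u v \<le> 1"
      using member_le_sum[of _ C u] fin u(1,2) by (auto simp: less_imp_le)
    then show "x \<in> cell \<sigma>" unfolding cell_def using C u(1,2) u(3)[symmetric] by blast
  qed
qed

lemma simplex_face_imp_face_of:
  assumes "simplex_face \<tau> \<sigma>"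
  shows "\<tau> face_of \<sigma>"
proof -
  obtain C D where "simplex_of C \<sigma>" "D \<subseteq> C" "\<tau> = convex hull D"
    using assms unfolding simplex_face_def by blast
  then show ?thesis
    using face_of_convex_hull_affine_independent unfolding simplex_of_def by blast
qed

lemma cell_subset_simplex:
  assumes "is_simplex \<sigma>"
  shows "cell \<sigma> \<subseteq> \<sigma>"
  using cell_eq_rel_interior[OF assms] rel_interior_subset by simp

lemma convex_cell:
  assumes "is_simplex \<sigma>"
  shows "convex (cell \<sigma>)"
proof -
  have "convex \<sigma>" using assms unfolding is_simplex_def simplex_of_def by auto
  then show ?thesis using cell_eq_rel_interior[OF assms] convex_rel_interior by simp
qed

lemma simplicial_complex_cells_disjoint:
  assumes K: "simplicial_complex K" and "\<sigma> \<in> K" "\<tau> \<in> K"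
    and x: "x \<in> cell \<sigma>" "x \<in> cell \<tau>"
  shows "\<sigma> = \<tau>"
proof -
  have "is_simplex \<sigma>" "is_simplex \<tau>"
    using K \<open>\<sigma> \<in> K\<close> \<open>\<tau> \<in> K\<close> unfolding simplicial_complex_def by auto
  then have x_ri: "x \<in> rel_interior \<sigma>" "x \<in> rel_interior \<tau>"
    using x cell_eq_rel_interior by auto
  then have "x \<in> \<sigma> \<inter> \<tau>" using rel_interior_subset by blast
  then have "(\<sigma> \<inter> \<tau>) face_of \<sigma>" "(\<sigma> \<inter> \<tau>) face_of \<tau>"
    using K \<open>\<sigma> \<in> K\<close> \<open>\<tau> \<in> K\<close> simplex_face_imp_face_of
    unfolding simplicial_complex_def by blast+
  then have "\<sigma> \<inter> \<tau> = \<sigma>" "\<sigma> \<inter> \<tau> = \<tau>"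
    using face_of_disjoint_rel_interior x_ri \<open>x \<in> \<sigma> \<inter> \<tau>\<close> by blast+
  then show ?thesis by simp
qed

text \<open>The cell containing \<open>x\<close> is spanned by the vertices carrying positive barycentric weight.\<close>
lemma simplicial_complex_cell_cover:
  assumes K: "simplicial_complex K" and x: "x \<in> carrier_poly K"
  shows "\<exists>\<sigma>\<in>K. x \<in> cell \<sigma>"
proof -
  obtain \<sigma> where "\<sigma> \<in> K" "x \<in> \<sigma>" using x unfolding carrier_poly_def by blast
  obtain C where C: "simplex_of C \<sigma>"
    using K \<open>\<sigma> \<in> K\<close> unfolding simplicial_complex_def is_simplex_def by blast
  then have indep: "\<not> affine_dependent C" and fin: "finite C" and \<sigma>: "\<sigma> = convex hull C"
    unfolding simplex_of_def by auto
  obtain u where u: "\<forall>v\<in>C. 0 \<le> u v" "sum u C = 1" "(\<Sum>v\<in>C. u v *\<^sub>R v) = x"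
    using \<open>x \<in> \<sigma>\<close> \<sigma> convex_hull_finite[OF fin] by blast
  define D where "D = {v\<in>C. 0 < u v}"
  have "D \<subseteq> C" and finD: "finite D" using fin unfolding D_def by auto
  have zero: "\<forall>v\<in>C - D. u v = 0" using u(1) unfolding D_def by force
  have sum_D: "sum u D = 1"
    using u(2) sum.mono_neutral_left[OF fin \<open>D \<subseteq> C\<close> zero] by simp
  have x_D: "(\<Sum>v\<in>D. u v *\<^sub>R v) = x"
    using u(3) sum.mono_neutral_left[OF fin \<open>D \<subseteq> C\<close>, of "\<lambda>v. u v *\<^sub>R v"] zero by simp
  have "D \<noteq> {}" using sum_D by auto
  have simplex_D: "simplex_of D (convex hull D)"
    unfolding simplex_of_def using finD \<open>D \<noteq> {}\<close> affine_independent_subset[OF indep \<open>D \<subseteq> C\<close>]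
    by simp
  have "simplex_face (convex hull D) \<sigma>"
    unfolding simplex_face_def using C \<open>D \<subseteq> C\<close> \<open>D \<noteq> {}\<close> by blast
  then have D_in_K: "convex hull D \<in> K"
    using K \<open>\<sigma> \<in> K\<close> unfolding simplicial_complex_def by blast
  have "\<forall>v\<in>D. 0 < u v \<and> u v \<le> 1"
    using member_le_sum[of _ D u] finD sum_D unfolding D_def by auto
  then have "x \<in> cell (convex hull D)"
    unfolding cell_def using simplex_D sum_D x_D[symmetric] by blast
  with D_in_K show ?thesis by blast
qed

lemma topo_path_prepend_segment:
  assumes \<pi>: "topo_path K x \<pi>" and seg: "closed_segment y x \<subseteq> carrier_poly K"
  defines "\<rho> \<equiv> linepath y x +++ \<pi>"
  shows "topo_path K y \<rho>" and "\<rho> 1 = \<pi> 1"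
    and "\<And>r. r \<in> {0..<1} \<Longrightarrow> \<rho> r \<in> closed_segment y x \<or> (\<exists>s\<in>{0..<1}. \<rho> r = \<pi> s)"
proof -
  have "path \<pi>" "pathstart \<pi> = x" "path_image \<pi> \<subseteq> carrier_poly K"
    using \<pi> unfolding topo_path_def path_def path_image_def pathstart_def by auto
  then have "path \<rho>" "path_image \<rho> \<subseteq> carrier_poly K"
    using seg path_image_join_subset[of "linepath y x" \<pi>] unfolding \<rho>_def by auto
  moreover have "\<rho> 0 = y" unfolding \<rho>_def joinpaths_def linepath_def by simp
  ultimately show "topo_path K y \<rho>" unfolding topo_path_def path_def path_image_def by blast
  show "\<rho> 1 = \<pi> 1" unfolding \<rho>_def joinpaths_def by simp
  fix r :: real assume r: "r \<in> {0..<1}"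
  show "\<rho> r \<in> closed_segment y x \<or> (\<exists>s\<in>{0..<1}. \<rho> r = \<pi> s)"
  proof (cases "r \<le> 1/2")
    case True
    then have "\<rho> r = linepath y x (2 * r)" unfolding \<rho>_def joinpaths_def by simp
    then show ?thesis using r True linepath_in_path[of "2 * r" y x] by auto
  next
    case False
    then have "\<rho> r = \<pi> (2 * r - 1)" unfolding \<rho>_def joinpaths_def by simp
    then show ?thesis using r False by (intro disjI2 bexI[of _ "2 * r - 1"]) auto
  qed
qed

lemma sat_cell_invariant:
  assumes M: "polyhedral_model K V" and "\<sigma> \<in> K"
  shows "x \<in> cell \<sigma> \<Longrightarrow> y \<in> cell \<sigma> \<Longrightarrow> sat K V x \<phi> \<longleftrightarrow> sat K V y \<phi>"
proof (induction \<phi> arbitrary: x y)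
  case (Atom p)
  have K: "simplicial_complex K" using M unfolding polyhedral_model_def by blast
  obtain S where "S \<subseteq> K" and V_p: "V p = \<Union>(cell ` S)"
    using M unfolding polyhedral_model_def by blast
  have "z \<in> V p \<longleftrightarrow> \<sigma> \<in> S" if "z \<in> cell \<sigma>" for z
  proof
    assume "z \<in> V p"
    then obtain \<tau> where "\<tau> \<in> S" "z \<in> cell \<tau>" using V_p by blast
    then show "\<sigma> \<in> S"
      using simplicial_complex_cells_disjoint[OF K \<open>\<sigma> \<in> K\<close> _ \<open>z \<in> cell \<sigma>\<close>] \<open>S \<subseteq> K\<close>
      by blast
  qed (use V_p that in blast)
  then have "x \<in> V p \<longleftrightarrow> y \<in> V p" using Atom.prems by blast
  then show ?case by simp
next
  case (Neg \<phi>)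
  show ?case using Neg.IH[OF Neg.prems] by simp
next
  case (Conj \<phi>1 \<phi>2)
  show ?case using Conj.IH(1,2)[OF Conj.prems] by simp
next
  case (Eta \<phi> \<psi>)
  have K: "simplicial_complex K" using M unfolding polyhedral_model_def by blast
  then have "is_simplex \<sigma>" using \<open>\<sigma> \<in> K\<close> unfolding simplicial_complex_def by blast
  have transfer: "sat K V y (Eta \<phi> \<psi>)"
    if "x \<in> cell \<sigma>" "y \<in> cell \<sigma>" and sat_x: "sat K V x (Eta \<phi> \<psi>)" for x y
  proof -
    obtain \<pi> where \<pi>: "topo_path K x \<pi>" "sat K V (\<pi> 1) \<psi>" "\<forall>r\<in>{0..<1}. sat K V (\<pi> r) \<phi>"
      using sat_x by auto
    have "\<pi> 0 = x" using \<pi>(1) unfolding topo_path_def by simp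
    then have "sat K V x \<phi>" using \<pi>(3) by force
    have seg_cell: "closed_segment y x \<subseteq> cell \<sigma>"
      using convex_cell[OF \<open>is_simplex \<sigma>\<close>] that(1,2) closed_segment_subset by blast
    moreover have "cell \<sigma> \<subseteq> carrier_poly K"
      using cell_subset_simplex[OF \<open>is_simplex \<sigma>\<close>] \<open>\<sigma> \<in> K\<close> unfolding carrier_poly_def by blast
    ultimately have seg: "closed_segment y x \<subseteq> carrier_poly K" by blast
    let ?\<rho> = "linepath y x +++ \<pi>"
    note \<rho> = topo_path_prepend_segment[OF \<pi>(1) seg]
    have "sat K V (?\<rho> r) \<phi>" if r: "r \<in> {0..<1}" for r
    proof -
      consider "?\<rho> r \<in> closed_segment y x" | s where "s \<in> {0..<1}" "?\<rho> r = \<pi> s"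
        using \<rho>(3)[OF r] by blast
      then show ?thesis
      proof cases
        case 1
        then show ?thesis
          using seg_cell Eta.IH(1)[OF \<open>x \<in> cell \<sigma>\<close>, of "?\<rho> r"] \<open>sat K V x \<phi>\<close> by blast
      next
        case 2
        then show ?thesis using \<pi>(3) by simp
      qed
    qed
    then show ?thesis using \<rho>(1,2) \<pi>(2) by auto
  qed
  show ?case using transfer Eta.prems by blast
qed

lemma sat_weak_simp_bisim_invariant:
  assumes B: "weak_simp_bisim K V B"
  shows "B x y \<Longrightarrow> sat K V x \<phi> \<longleftrightarrow> sat K V y \<phi>"
proof (induction \<phi> arbitrary: x y)
  case (Atom p)
  then show ?case using B unfolding weak_simp_bisim_def by simp
next
  case (Neg \<phi>)
  show ?case using Neg.IH[OF Neg.prems] by simp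
next
  case (Conj \<phi>1 \<phi>2)
  show ?case using Conj.IH(1,2)[OF Conj.prems] by simp
next
  case (Eta \<phi> \<psi>)
  have transfer: "sat K V y (Eta \<phi> \<psi>)" if "B x y" and sat_x: "sat K V x (Eta \<phi> \<psi>)" for x y
  proof -
    obtain \<pi>1 where \<pi>1: "topo_path K x \<pi>1" "sat K V (\<pi>1 1) \<psi>"
      "\<forall>r\<in>{0..<1}. sat K V (\<pi>1 r) \<phi>"
      using sat_x by auto
    obtain \<pi>2 where \<pi>2: "topo_path K y \<pi>2" "B (\<pi>1 1) (\<pi>2 1)"
      "\<forall>r2\<in>{0..<1}. \<exists>r1\<in>{0..<1}. B (\<pi>1 r1) (\<pi>2 r2)"
      using B \<pi>1(1) \<open>B x y\<close> unfolding weak_simp_bisim_def by blast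
    have "sat K V (\<pi>2 1) \<psi>" using Eta.IH(2)[OF \<pi>2(2)] \<pi>1(2) by simp
    moreover have "\<forall>r\<in>{0..<1}. sat K V (\<pi>2 r) \<phi>" using Eta.IH(1) \<pi>2(3) \<pi>1(3) by blast
    ultimately show ?thesis using \<pi>2(1) by auto
  qed
  have "B y x" using Eta.prems B unfolding weak_simp_bisim_def by blast
  then show ?case using transfer Eta.prems by blast
qed

definition slcs_definable :: "'a::euclidean_space set set \<Rightarrow> ('p \<Rightarrow> 'a set) \<Rightarrow> 'a set \<Rightarrow> ('a \<Rightarrow> bool) \<Rightarrow> bool"
  where "slcs_definable K V U P \<longleftrightarrow> (\<exists>\<phi>. \<forall>x\<in>U. sat K V x \<phi> \<longleftrightarrow> P x)"

lemma slcs_definable_sat: "slcs_definable K V U (\<lambda>x. sat K V x \<phi>)"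
  unfolding slcs_definable_def by blast

lemma slcs_definable_Ball:
  assumes "finite A" and "\<forall>a\<in>A. slcs_definable K V U (P a)"
  shows "slcs_definable K V U (\<lambda>x. \<forall>a\<in>A. P a x)"
  using assms
proof (induction A rule: finite_induct)
  case empty
  show ?case unfolding slcs_definable_def
    by (rule exI[of _ "Neg (Conj (Atom undefined) (Neg (Atom undefined)))"]) simp
next
  case (insert a A)
  obtain \<phi> where "\<forall>x\<in>U. sat K V x \<phi> \<longleftrightarrow> (\<forall>a\<in>A. P a x)"
    using insert unfolding slcs_definable_def by blast
  moreover obtain f where "\<forall>x\<in>U. sat K V x f \<longleftrightarrow> P a x"
    using insert.prems unfolding slcs_definable_def by blast
  ultimately show ?case unfolding slcs_definable_def by (intro exI[of _ "Conj f \<phi>"]) auto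
qed

lemma slcs_definable_Not:
  assumes "slcs_definable K V U P"
  shows "slcs_definable K V U (\<lambda>x. \<not> P x)"
proof -
  obtain \<phi> where "\<forall>x\<in>U. sat K V x \<phi> \<longleftrightarrow> P x" using assms unfolding slcs_definable_def by blast
  then show ?thesis unfolding slcs_definable_def by (intro exI[of _ "Neg \<phi>"]) simp
qed

lemma slcs_definable_Bex:
  assumes "finite A" and "\<forall>a\<in>A. slcs_definable K V U (P a)"
  shows "slcs_definable K V U (\<lambda>x. \<exists>a\<in>A. P a x)"
proof -
  have "\<forall>a\<in>A. slcs_definable K V U (\<lambda>x. \<not> P a x)"
    using assms(2) slcs_definable_Not by blast
  then have "slcs_definable K V U (\<lambda>x. \<forall>a\<in>A. \<not> P a x)"
    by (rule slcs_definable_Ball[OF assms(1), where P = "\<lambda>a x. \<not> P a x"])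
  from slcs_definable_Not[OF this] show ?thesis by simp
qed

lemma eta_equiv_refl: "eta_equiv K V x x"
  unfolding eta_equiv_def by simp

lemma eta_equiv_sym: "eta_equiv K V x y \<Longrightarrow> eta_equiv K V y x"
  unfolding eta_equiv_def by simp

lemma eta_equiv_trans: "eta_equiv K V x y \<Longrightarrow> eta_equiv K V y z \<Longrightarrow> eta_equiv K V x z"
  unfolding eta_equiv_def by simp

lemma eta_equiv_finite_representatives:
  assumes M: "polyhedral_model K V"
  obtains R where "finite R" and "\<forall>y\<in>carrier_poly K. \<exists>r\<in>R. eta_equiv K V y r"
proof
  have K: "simplicial_complex K" using M unfolding polyhedral_model_def by blast
  define R where "R = (\<lambda>\<sigma>. SOME z. z \<in> cell \<sigma>) ` K"
  show "finite R" using K unfolding R_def simplicial_complex_def by simp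
  show "\<forall>y\<in>carrier_poly K. \<exists>r\<in>R. eta_equiv K V y r"
  proof
    fix y assume "y \<in> carrier_poly K"
    then obtain \<sigma> where "\<sigma> \<in> K" "y \<in> cell \<sigma>" using simplicial_complex_cell_cover[OF K] by blast
    moreover have "(SOME z. z \<in> cell \<sigma>) \<in> cell \<sigma>" using \<open>y \<in> cell \<sigma>\<close> by (rule someI)
    ultimately have "eta_equiv K V y (SOME z. z \<in> cell \<sigma>)"
      unfolding eta_equiv_def using sat_cell_invariant[OF M] by blast
    then show "\<exists>r\<in>R. eta_equiv K V y r" using \<open>\<sigma> \<in> K\<close> unfolding R_def by blast
  qed
qed

lemma eta_class_definable:
  assumes "finite R" and R: "\<forall>y\<in>U. \<exists>r\<in>R. eta_equiv K V y r"
  shows "slcs_definable K V U (eta_equiv K V x)"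
proof -
  define A where "A = {r\<in>R. \<not> eta_equiv K V x r}"
  have "\<exists>\<phi>. sat K V x \<phi> \<and> \<not> sat K V r \<phi>" if "r \<in> A" for r
  proof -
    obtain \<phi> where "sat K V x \<phi> \<noteq> sat K V r \<phi>"
      using \<open>r \<in> A\<close> unfolding A_def eta_equiv_def by blast
    then show ?thesis by (cases "sat K V x \<phi>") (auto intro: exI[of _ "Neg \<phi>"])
  qed
  then obtain \<delta> where \<delta>: "\<forall>r\<in>A. sat K V x (\<delta> r) \<and> \<not> sat K V r (\<delta> r)" by metis
  have "finite A" using \<open>finite R\<close> unfolding A_def by simp
  then have "slcs_definable K V U (\<lambda>y. \<forall>r\<in>A. sat K V y (\<delta> r))"
    using slcs_definable_Ball[where P = "\<lambda>r y. sat K V y (\<delta> r)"] slcs_definable_sat by blast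
  moreover have "(\<forall>r\<in>A. sat K V y (\<delta> r)) \<longleftrightarrow> eta_equiv K V x y" if "y \<in> U" for y
  proof
    assume sat_\<delta>: "\<forall>r\<in>A. sat K V y (\<delta> r)"
    obtain r where "r \<in> R" "eta_equiv K V y r" using R \<open>y \<in> U\<close> by blast
    then have "r \<notin> A" using sat_\<delta> \<delta> unfolding eta_equiv_def by blast
    then have "eta_equiv K V x r" using \<open>r \<in> R\<close> unfolding A_def by blast
    then show "eta_equiv K V x y" using \<open>eta_equiv K V y r\<close> eta_equiv_sym eta_equiv_trans by blast
  qed (use \<delta> in \<open>auto simp: eta_equiv_def\<close>)
  ultimately show ?thesis unfolding slcs_definable_def by auto
qed

lemma eta_equiv_path_matching:
  assumes M: "polyhedral_model K V" and "eta_equiv K V x y" and \<pi>1: "topo_path K x \<pi>1"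
  defines "B \<equiv> \<lambda>x y. x \<in> carrier_poly K \<and> y \<in> carrier_poly K \<and> eta_equiv K V x y"
  shows "\<exists>\<pi>2. topo_path K y \<pi>2 \<and> B (\<pi>1 1) (\<pi>2 1) \<and>
           (\<forall>r2\<in>{0..<1}. \<exists>r1\<in>{0..<1}. B (\<pi>1 r1) (\<pi>2 r2))"
proof -
  let ?U = "carrier_poly K"
  obtain R where "finite R" and R: "\<forall>y\<in>?U. \<exists>r\<in>R. eta_equiv K V y r"
    using eta_equiv_finite_representatives[OF M] by blast
  note class_definable = eta_class_definable[OF \<open>finite R\<close> R]
  have \<pi>1_U: "\<pi>1 t \<in> ?U" if "t \<in> {0..1}" for t using \<pi>1 that unfolding topo_path_def by blast
  define S where "S = {r\<in>R. \<exists>t\<in>{0..<1}. eta_equiv K V (\<pi>1 t) r}"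
  have "finite S" using \<open>finite R\<close> unfolding S_def by simp
  then have "slcs_definable K V ?U (\<lambda>z. \<exists>r\<in>S. eta_equiv K V r z)"
    using class_definable by (intro slcs_definable_Bex[where P = "eta_equiv K V"]) auto
  then obtain \<Phi> where \<Phi>: "\<forall>z\<in>?U. sat K V z \<Phi> \<longleftrightarrow> (\<exists>r\<in>S. eta_equiv K V r z)"
    unfolding slcs_definable_def by blast
  obtain \<psi> where \<psi>: "\<forall>z\<in>?U. sat K V z \<psi> \<longleftrightarrow> eta_equiv K V (\<pi>1 1) z"
    using class_definable unfolding slcs_definable_def by blast
  have "sat K V (\<pi>1 t) \<Phi>" if t: "t \<in> {0..<1}" for t
  proof -
    have "\<pi>1 t \<in> ?U" using \<pi>1_U t by simp
    then obtain r where "r \<in> R" "eta_equiv K V (\<pi>1 t) r" using R by blast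
    then have "r \<in> S" "eta_equiv K V r (\<pi>1 t)" unfolding S_def using t eta_equiv_sym by auto
    then show ?thesis using \<Phi> \<open>\<pi>1 t \<in> ?U\<close> by blast
  qed
  moreover have "sat K V (\<pi>1 1) \<psi>" using \<psi> \<pi>1_U[of 1] eta_equiv_refl by simp
  ultimately have "sat K V x (Eta \<Phi> \<psi>)" using \<pi>1 by auto
  then have "sat K V y (Eta \<Phi> \<psi>)" using \<open>eta_equiv K V x y\<close> unfolding eta_equiv_def by blast
  then obtain \<pi>2 where \<pi>2: "topo_path K y \<pi>2" "sat K V (\<pi>2 1) \<psi>"
    "\<forall>r\<in>{0..<1}. sat K V (\<pi>2 r) \<Phi>" by auto
  have \<pi>2_U: "\<pi>2 t \<in> ?U" if "t \<in> {0..1}" for t using \<pi>2(1) that unfolding topo_path_def by blast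
  have "B (\<pi>1 1) (\<pi>2 1)" unfolding B_def using \<pi>1_U[of 1] \<pi>2_U[of 1] \<psi> \<pi>2(2) by simp
  moreover have "\<exists>r1\<in>{0..<1}. B (\<pi>1 r1) (\<pi>2 r2)" if r2: "r2 \<in> {0..<1}" for r2
  proof -
    have "\<pi>2 r2 \<in> ?U" using \<pi>2_U r2 by simp
    then obtain r where "r \<in> S" "eta_equiv K V r (\<pi>2 r2)" using \<Phi> \<pi>2(3) r2 by blast
    then obtain t where t: "t \<in> {0..<1}" "eta_equiv K V (\<pi>1 t) r" unfolding S_def by blast
    then have "eta_equiv K V (\<pi>1 t) (\<pi>2 r2)"
      using \<open>eta_equiv K V r (\<pi>2 r2)\<close> eta_equiv_trans by blast
    moreover have "\<pi>1 t \<in> ?U" using \<pi>1_U t(1) by simp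
    ultimately show ?thesis using t(1) \<open>\<pi>2 r2 \<in> ?U\<close> unfolding B_def by blast
  qed
  ultimately show ?thesis using \<pi>2(1) by blast
qed

lemma eta_equiv_weak_simp_bisim:
  assumes "polyhedral_model K V"
  shows "weak_simp_bisim K V
           (\<lambda>x y. x \<in> carrier_poly K \<and> y \<in> carrier_poly K \<and> eta_equiv K V x y)"
    (is "weak_simp_bisim K V ?B")
proof -
  have "x \<in> V p \<longleftrightarrow> y \<in> V p" if "eta_equiv K V x y" for x y p
    using that unfolding eta_equiv_def by (metis sat.simps(1))
  then show ?thesis
    unfolding weak_simp_bisim_def using eta_equiv_sym eta_equiv_path_matching[OF assms] by blast
qed

theorem theorem2:
  fixes K :: "'a::euclidean_space set set" and V :: "'p \<Rightarrow> 'a set" and x1 x2 :: 'a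
  assumes "polyhedral_model K V"
    and "x1 \<in> carrier_poly K" and "x2 \<in> carrier_poly K"
  shows "eta_equiv K V x1 x2 \<longleftrightarrow> weak_simp_bisimilar K V x1 x2"
proof
  assume "eta_equiv K V x1 x2"
  then show "weak_simp_bisimilar K V x1 x2"
    using eta_equiv_weak_simp_bisim[OF assms(1)] assms(2,3)
    unfolding weak_simp_bisimilar_def by blast
next
  assume "weak_simp_bisimilar K V x1 x2"
  then show "eta_equiv K V x1 x2"
    unfolding weak_simp_bisimilar_def eta_equiv_def using sat_weak_simp_bisim_invariant by blast
qed

end
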